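(* In the setting of the adaptive implicit-explicit iteration described in the context, the generated sequence $\{(\lambda_k,\bm d_k)\}_{k\ge0}$ satisfies, for every $k\ge0$, $\lambda_k\ge0$, $\|\bm d_k\|_2\le r$, and $\lambda_k(\|\bm d_k\|_2-r)=0$.
   Context: Let $n\ge1$, $r>0$, $\bm g\in\mathbb R^n$ with $\bm g\neq0$, and $\bm H=\bm D+\bm T\in\mathbb R^{n\times n}$, where $\bm D$ is diagonal with nonnegative diagonal entries $D_{i,i}$ and $\bm T$ is symmetric. (In the paper, $\bm D$ and $\bm T$ are the parts of the Hessian of the discretized Landau–Brazovskii energy coming from the interaction and the bulk terms.) Let $f(\bm d)=\bm g^\top\bm d+\frac12\bm d^\top\bm H\bm d$, and consider the trust region subproblem $\min_{\|\bm d\|_2\le r}f(\bm d)$. Adaptive implicit-explicit iteration with step size $\eta>0$: set $\bm d_0=-r\bm g/\|\bm g\|_2$ and $\lambda_0=0$. For $k=0,1,2,\dots$ (run indefinitely): let $\bm b_k=\bm d_k-\eta(\bm g+\bm T\bm d_k)$ and $\phi_k(\lambda)=\sum_{i=1}^n\big([\bm b_k]_i/(1+\eta(D_{i,i}+\lambda))\big)^2$ for $\lambda\ge0$; set $\lambda_{k+1}=0$ if $\phi_k(0)\le r^2$, and otherwise let $\lambda_{k+1}>0$ be the (unique) solution of $\phi_k(\lambda)=r^2$; then $\bm d_{k+1}=(\bm I+\eta(\bm D+\lambda_{k+1}\bm I))^{-1}\bm b_k$. *)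

theory Defs
  imports "HOL-Analysis.Analysis"
begin

definition aie_phi :: "real^'n^'n \<Rightarrow> real \<Rightarrow> real^'n \<Rightarrow> real \<Rightarrow> real" where
  "aie_phi D eta b lam = (\<Sum>i\<in>UNIV. (b $ i / (1 + eta * (D $ i $ i + lam)))^2)"

fun aie_iter :: "real^'n \<Rightarrow> real^'n^'n \<Rightarrow> real^'n^'n \<Rightarrow> real \<Rightarrow> real \<Rightarrow> nat \<Rightarrow> real \<times> (real^'n)" where
  "aie_iter g D T eta r 0 = (0, - ((r / norm g) *\<^sub>R g))"
| "aie_iter g D T eta r (Suc k) =
    (let d = snd (aie_iter g D T eta r k);
         b = d - eta *\<^sub>R (g + T *v d);
         lam' = (if aie_phi D eta b 0 \<le> r^2 then 0
                 else (THE lam. lam > 0 \<and> aie_phi D eta b lam = r^2))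
     in (lam', matrix_inv (mat 1 + eta *\<^sub>R (D + lam' *\<^sub>R mat 1)) *v b))"

end

theory Submission
  imports Defs
begin

(* Because D is diagonal, d(k+1) is b(k) scaled componentwise by
   1 / (1 + \<eta> (D(i,i) + \<lambda>(k+1))), so that |d(k+1)|^2 = \<phi>(k, \<lambda>(k+1)).
   For b(k) \<noteq> 0 the function \<phi>(k, -) is continuous, strictly decreasing on [0, \<infinity>) and
   bounded by (|b(k)| / (1 + \<eta> \<lambda>))^2. Hence if \<phi>(k, 0) > r^2 the intermediate value
   theorem yields a unique root \<lambda>(k+1) > 0, at which |d(k+1)| = r; otherwise
   \<lambda>(k+1) = 0 and |d(k+1)|^2 = \<phi>(k, 0) \<le> r^2. The initial iterate lies on the sphere
   and has multiplier 0. *)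

lemma matrix_inv_unique:
  fixes A B :: "'a::semiring_1^'n^'n"
  assumes "A ** B = mat 1" and "B ** A = mat 1"
  shows "matrix_inv A = B"
proof -
  have "A ** matrix_inv A = mat 1 \<and> matrix_inv A ** A = mat 1"
    unfolding matrix_inv_def by (rule someI[of _ B]) (use assms in blast)
  moreover have "matrix_inv A = (B ** A) ** matrix_inv A"
    using assms by simp
  ultimately show ?thesis
    by (simp add: matrix_mul_assoc[symmetric])
qed

lemma matrix_inv_diagonal:
  fixes c :: "'n::finite \<Rightarrow> 'a::field"
  assumes "\<And>i. c i \<noteq> 0"
  shows "matrix_inv (\<chi> i j. if i = j then c i else 0 :: 'a^'n^'n)
           = (\<chi> i j. if i = j then inverse (c i) else 0)"
  by (rule matrix_inv_unique)
     (simp_all add: matrix_matrix_mult_def mat_def vec_eq_iff assms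
        if_distrib[of "\<lambda>x. x * _"] cong: if_cong)

lemma diagonal_matrix_vector_mult:
  "(\<chi> i j. if i = j then c i else 0 :: 'a::semiring_1^'n^'n) *v x = (\<chi> i. c i * x$i)"
  by (simp add: matrix_vector_mult_def vec_eq_iff if_distrib[of "\<lambda>y. y * _"] cong: if_cong)

lemma power2_norm_vec: "(norm (x::real^'n))\<^sup>2 = (\<Sum>i\<in>UNIV. (x$i)\<^sup>2)"
  unfolding power2_norm_eq_inner by (simp add: inner_vec_def power2_eq_square)

lemma power2_divide_antimono:
  fixes a u v :: real
  assumes "0 < u" "u \<le> v"
  shows "(a / v)\<^sup>2 \<le> (a / u)\<^sup>2"
  using assms by (simp add: power_divide divide_left_mono power_mono)

lemma power2_divide_strict_antimono:
  fixes a u v :: real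
  assumes "0 < u" "u < v" "a \<noteq> 0"
  shows "(a / v)\<^sup>2 < (a / u)\<^sup>2"
  using assms by (simp add: power_divide divide_strict_left_mono power_strict_mono)

lemma aie_denominator_bounds:
  fixes D :: "real^'n^'n"
  assumes "eta > 0" "\<forall>i. D$i$i \<ge> 0" "0 \<le> lam"
  shows "1 + eta * lam \<le> 1 + eta * (D$i$i + lam)" and "0 < 1 + eta * (D$i$i + lam)"
  using assms by (simp_all add: add_pos_nonneg)

lemma aie_phi_zero_vec [simp]: "aie_phi D eta 0 lam = 0"
  by (simp add: aie_phi_def)

lemma aie_phi_strict_antimono:
  fixes D :: "real^'n^'n"
  assumes eta: "eta > 0" and D_nonneg: "\<forall>i. D$i$i \<ge> 0" and "b \<noteq> 0" "0 \<le> x" "x < y"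
  shows "aie_phi D eta b y < aie_phi D eta b x"
  unfolding aie_phi_def
proof (rule sum_strict_mono_ex1)
  have less: "1 + eta * (D$i$i + x) < 1 + eta * (D$i$i + y)" for i
    using eta \<open>x < y\<close> by simp
  have pos: "0 < 1 + eta * (D$i$i + x)" for i
    using aie_denominator_bounds(2)[OF eta D_nonneg \<open>0 \<le> x\<close>] .
  show "\<forall>i\<in>UNIV. (b$i / (1 + eta * (D$i$i + y)))\<^sup>2 \<le> (b$i / (1 + eta * (D$i$i + x)))\<^sup>2"
    using pos less by (simp add: power2_divide_antimono less_imp_le)
  obtain i where "b$i \<noteq> 0"
    using \<open>b \<noteq> 0\<close> by (auto simp: vec_eq_iff)
  then show "\<exists>i\<in>UNIV. (b$i / (1 + eta * (D$i$i + y)))\<^sup>2 < (b$i / (1 + eta * (D$i$i + x)))\<^sup>2"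
    using pos less power2_divide_strict_antimono by blast
qed simp

lemma aie_phi_continuous_on:
  fixes D :: "real^'n^'n"
  assumes "eta > 0" "\<forall>i. D$i$i \<ge> 0"
  shows "continuous_on {0..} (aie_phi D eta b)"
  unfolding aie_phi_def[abs_def]
  using aie_denominator_bounds(2)[OF assms]
  by (intro continuous_intros) (auto simp: less_imp_neq[symmetric])

lemma aie_phi_le:
  fixes D :: "real^'n^'n"
  assumes "eta > 0" "\<forall>i. D$i$i \<ge> 0" "0 \<le> lam"
  shows "aie_phi D eta b lam \<le> (norm b / (1 + eta * lam))\<^sup>2"
proof -
  have "0 < 1 + eta * lam"
    using assms by (simp add: add_pos_nonneg)
  then have "aie_phi D eta b lam \<le> (\<Sum>i\<in>UNIV. (b$i / (1 + eta * lam))\<^sup>2)"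
    unfolding aie_phi_def
    using aie_denominator_bounds(1)[OF assms]
    by (intro sum_mono power2_divide_antimono) auto
  also have "\<dots> = (norm b / (1 + eta * lam))\<^sup>2"
    by (simp add: power2_norm_vec power_divide sum_divide_distrib)
  finally show ?thesis .
qed

lemma aie_phi_unique_root:
  fixes D :: "real^'n^'n"
  assumes eta: "eta > 0" and D_nonneg: "\<forall>i. D$i$i \<ge> 0" and "r > 0"
    and above: "aie_phi D eta b 0 > r\<^sup>2"
  shows "\<exists>!lam. lam > 0 \<and> aie_phi D eta b lam = r\<^sup>2"
proof -
  have "b \<noteq> 0"
    using above by auto
  define L where "L = norm b / (r * eta)"
  have "0 \<le> L"
    using eta \<open>r > 0\<close> by (simp add: L_def)
  have "aie_phi D eta b L \<le> (norm b / (1 + eta * L))\<^sup>2"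
    by (rule aie_phi_le[OF eta D_nonneg \<open>0 \<le> L\<close>])
  also have "\<dots> \<le> (norm b / (norm b / r))\<^sup>2"
    using \<open>b \<noteq> 0\<close> \<open>r > 0\<close> eta by (intro power2_divide_antimono) (auto simp: L_def)
  also have "\<dots> = r\<^sup>2"
    using \<open>b \<noteq> 0\<close> by simp
  finally have below: "aie_phi D eta b L \<le> r\<^sup>2" .
  obtain lam where lam: "0 \<le> lam" "lam \<le> L" "aie_phi D eta b lam = r\<^sup>2"
    using IVT2'[OF below less_imp_le[OF above] \<open>0 \<le> L\<close>]
      continuous_on_subset[OF aie_phi_continuous_on[OF eta D_nonneg]]
    by auto
  then have "lam > 0"
    using above by (cases "lam = 0") auto
  show ?thesis
  proof (rule ex1I[of _ lam])
    show "lam > 0 \<and> aie_phi D eta b lam = r\<^sup>2"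
      using \<open>lam > 0\<close> lam by simp
    show "mu = lam" if "mu > 0 \<and> aie_phi D eta b mu = r\<^sup>2" for mu
      using that lam \<open>lam > 0\<close> \<open>b \<noteq> 0\<close>
        aie_phi_strict_antimono[OF eta D_nonneg, of b mu lam]
        aie_phi_strict_antimono[OF eta D_nonneg, of b lam mu]
      by (cases mu lam rule: linorder_cases) auto
  qed
qed

definition aie_multiplier :: "real^'n^'n \<Rightarrow> real \<Rightarrow> real \<Rightarrow> real^'n \<Rightarrow> real" where
  "aie_multiplier D eta r b =
     (if aie_phi D eta b 0 \<le> r\<^sup>2 then 0 else THE lam. lam > 0 \<and> aie_phi D eta b lam = r\<^sup>2)"

definition aie_resolvent :: "real^'n^'n \<Rightarrow> real \<Rightarrow> real \<Rightarrow> real^'n \<Rightarrow> real^'n" where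
  "aie_resolvent D eta lam b = matrix_inv (mat 1 + eta *\<^sub>R (D + lam *\<^sub>R mat 1)) *v b"

lemma aie_iter_Suc_eq:
  "aie_iter g D T eta r (Suc k) =
     (let d = snd (aie_iter g D T eta r k);
          b = d - eta *\<^sub>R (g + T *v d);
          lam = aie_multiplier D eta r b
      in (lam, aie_resolvent D eta lam b))"
  by (simp add: aie_multiplier_def aie_resolvent_def Let_def)

lemma aie_multiplier_properties:
  fixes D :: "real^'n^'n" and b :: "real^'n"
  assumes "eta > 0" "\<forall>i. D$i$i \<ge> 0" "r > 0"
  defines "lam \<equiv> aie_multiplier D eta r b"
  shows "0 \<le> lam" "aie_phi D eta b lam \<le> r\<^sup>2" "lam \<noteq> 0 \<Longrightarrow> aie_phi D eta b lam = r\<^sup>2"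
proof -
  have "lam = 0 \<and> aie_phi D eta b lam \<le> r\<^sup>2 \<or> lam > 0 \<and> aie_phi D eta b lam = r\<^sup>2"
  proof (cases "aie_phi D eta b 0 \<le> r\<^sup>2")
    case True
    then show ?thesis by (simp add: lam_def aie_multiplier_def)
  next
    case False
    then have "lam = (THE lam. lam > 0 \<and> aie_phi D eta b lam = r\<^sup>2)"
      by (simp add: lam_def aie_multiplier_def)
    then show ?thesis
      using theI'[OF aie_phi_unique_root[OF assms(1-3)]] False by simp
  qed
  then show "0 \<le> lam" "aie_phi D eta b lam \<le> r\<^sup>2" "lam \<noteq> 0 \<Longrightarrow> aie_phi D eta b lam = r\<^sup>2"
    by auto
qed

lemma aie_resolvent_diagonal:
  fixes D :: "real^'n^'n"
  assumes "eta > 0" "\<forall>i j. i \<noteq> j \<longrightarrow> D$i$j = 0" "\<forall>i. D$i$i \<ge> 0" "0 \<le> lam"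
  shows "aie_resolvent D eta lam b = (\<chi> i. b$i / (1 + eta * (D$i$i + lam)))"
proof -
  have diag: "mat 1 + eta *\<^sub>R (D + lam *\<^sub>R mat 1)
          = (\<chi> i j. if i = j then 1 + eta * (D$i$i + lam) else 0)"
    using assms(2) by (auto simp: mat_def vec_eq_iff)
  have "1 + eta * (D$i$i + lam) \<noteq> 0" for i
    using aie_denominator_bounds(2)[OF assms(1,3,4)] by (simp add: less_imp_neq[symmetric])
  then have "matrix_inv (mat 1 + eta *\<^sub>R (D + lam *\<^sub>R mat 1))
          = (\<chi> i j. if i = j then inverse (1 + eta * (D$i$i + lam)) else 0)"
    unfolding diag by (rule matrix_inv_diagonal)
  then show ?thesis
    by (simp add: aie_resolvent_def diagonal_matrix_vector_mult divide_inverse mult.commute)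
qed

lemma power2_norm_aie_resolvent:
  fixes D :: "real^'n^'n"
  assumes "eta > 0" "\<forall>i j. i \<noteq> j \<longrightarrow> D$i$j = 0" "\<forall>i. D$i$i \<ge> 0" "0 \<le> lam"
  shows "(norm (aie_resolvent D eta lam b))\<^sup>2 = aie_phi D eta b lam"
  by (simp add: aie_resolvent_diagonal[OF assms] power2_norm_vec aie_phi_def)

lemma aie_step_kkt:
  fixes D :: "real^'n^'n" and b :: "real^'n"
  assumes eta: "eta > 0" and D_diag: "\<forall>i j. i \<noteq> j \<longrightarrow> D$i$j = 0"
    and D_nonneg: "\<forall>i. D$i$i \<ge> 0" and "r > 0"
  defines "lam \<equiv> aie_multiplier D eta r b"
  shows "0 \<le> lam \<and> norm (aie_resolvent D eta lam b) \<le> r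
           \<and> lam * (norm (aie_resolvent D eta lam b) - r) = 0"
proof -
  let ?d = "aie_resolvent D eta lam b"
  note lam = aie_multiplier_properties[OF eta D_nonneg \<open>r > 0\<close>, of b, folded lam_def]
  have norm_sq: "(norm ?d)\<^sup>2 = aie_phi D eta b lam"
    by (rule power2_norm_aie_resolvent[OF eta D_diag D_nonneg lam(1)])
  have "norm ?d \<le> r"
    using power2_le_imp_le[of "norm ?d" r] lam(2) norm_sq \<open>r > 0\<close> by simp
  moreover have "norm ?d = r" if "lam \<noteq> 0"
    using power2_eq_imp_eq[of "norm ?d" r] lam(3)[OF that] norm_sq \<open>r > 0\<close> by simp
  ultimately show ?thesis
    using lam(1) by auto
qed

lemma aie_iter_kkt:
  fixes g :: "real^'n" and D T :: "real^'n^'n"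
  assumes "r > 0" "g \<noteq> 0" "eta > 0"
    and "\<forall>i j. i \<noteq> j \<longrightarrow> D$i$j = 0" "\<forall>i. D$i$i \<ge> 0"
  shows "fst (aie_iter g D T eta r k) \<ge> 0
           \<and> norm (snd (aie_iter g D T eta r k)) \<le> r
           \<and> fst (aie_iter g D T eta r k) * (norm (snd (aie_iter g D T eta r k)) - r) = 0"
proof (cases k)
  case 0
  then show ?thesis
    using assms(1,2) by simp
next
  case (Suc m)
  show ?thesis
    unfolding Suc aie_iter_Suc_eq Let_def using aie_step_kkt[OF assms(3-5,1)] by simp
qed

theorem mainTheorem3:
  fixes g :: "real^'n" and D T :: "real^'n^'n" and r eta :: real
  assumes r_pos: "r > 0"
    and g_nz: "g \<noteq> 0"
    and eta_pos: "eta > 0"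
    and D_diag: "\<forall>i j. i \<noteq> j \<longrightarrow> D $ i $ j = 0"
    and D_nonneg: "\<forall>i. D $ i $ i \<ge> 0"
    and T_symm: "transpose T = T"
  shows "\<forall>k. fst (aie_iter g D T eta r k) \<ge> 0
           \<and> norm (snd (aie_iter g D T eta r k)) \<le> r
           \<and> fst (aie_iter g D T eta r k) * (norm (snd (aie_iter g D T eta r k)) - r) = 0"
  using aie_iter_kkt[OF r_pos g_nz eta_pos D_diag D_nonneg] by blast

end
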